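(* Let $V^+, V^-$, the $S^1$-action with weights $\kappa_i$, and the norms $|z^\pm|^2$ be as in the context, and let $\Phi(z^+,z^-) = |z^+|^2-|z^-|^2$ on $V^+\times V^-$. Let $\delta>0$, let $\rho:\mathbb{R}\to\mathbb{R}$ be smooth with $\rho(t)=1$ for $t<\delta$, $\rho(t)=0$ for $t>2\delta$, $\rho'\le 0$, and let $C=\sup|\rho'|$. Let $\epsilon\neq 0$ with $|\epsilon|<C^{-1}$ and $|\epsilon|<\delta$. Define $$\tilde\Phi(z^+,z^-) = |z^+|^2-|z^-|^2+\epsilon\,\rho(|z^+|^2+|z^-|^2)$$ and $\psi: V^+\times V^-\to\Phi^{-1}(0)$ by $\psi(z^+,z^-) = \big((|z^-|^2/|z^+|^2)^{1/4}z^+,\ (|z^+|^2/|z^-|^2)^{1/4}z^-\big)$ if $z^+\neq0\neq z^-$, and $\psi(z^+,z^-)=(0,0)$ if $z^+=0$ or $z^-=0$. Then: $\tilde\Phi$ is $G\times S^1$-invariant; its only critical point is $(0,0)$, which is nondegenerate; $0$ is a regular value of $\tilde\Phi$; $\tilde\Phi^{-1}(0)$ coincides with $\Phi^{-1}(0)$ on $\{|z^+|^2+|z^-|^2>2\delta\}$ and with $\Phi^{-1}(-\epsilon)$ on $\{|z^+|^2+|z^-|^2<\delta\}$; and $\psi$ restricts to a $G\times S^1$-equivariant diffeomorphism from $\tilde\Phi^{-1}(0)\setminus\psi^{-1}(0,0)$ onto $\Phi^{-1}(0)\setminus\{(0,0)\}$.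
   Context: $V^+=\bigoplus_{i\le s}\mathbb{C}^{n_i}$, $V^-=\bigoplus_{i>s}\mathbb{C}^{n_i}$, with $S^1$ acting on $\mathbb{C}^{n_i}$ by $\lambda\mapsto\lambda^{\kappa_i}$, where $\kappa_1,\dots,\kappa_s>0$ and $\kappa_{s+1},\dots,\kappa_k<0$ are distinct integers; $G=\prod U(n_i)$ acts block-diagonally. $|z^+|^2=\sum_{i\le s}\kappa_i|\vec z_i|^2$ and $|z^-|^2=\sum_{i>s}|\kappa_i||\vec z_i|^2$. *)

theory Defs
  imports "HOL-Analysis.Analysis"
begin

text \<open>C-infinity on an open set U: there is a family D of iterated directional
derivatives, D [] = f, and for every list of directions vs the map D vs is
(Frechet) differentiable at every point of U with derivative v \<mapsto> D (v # vs) x.\<close>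
definition smooth_on :: "'a::euclidean_space set \<Rightarrow> ('a \<Rightarrow> 'b::euclidean_space) \<Rightarrow> bool" where
  "smooth_on U f \<longleftrightarrow> open U \<and>
     (\<exists>D :: 'a list \<Rightarrow> 'a \<Rightarrow> 'b. D [] = f \<and>
        (\<forall>vs. \<forall>x\<in>U. (D vs has_derivative (\<lambda>v. D (v # vs) x)) (at x)))"

definition smooth_map_on :: "'a::euclidean_space set \<Rightarrow> ('a \<Rightarrow> 'b::euclidean_space) \<Rightarrow> bool" where
  "smooth_map_on S f \<longleftrightarrow>
     (\<forall>x\<in>S. \<exists>U g. x \<in> U \<and> smooth_on U g \<and> (\<forall>y\<in>S \<inter> U. g y = f y))"

definition diffeomorphism_onto ::
  "('a::euclidean_space \<Rightarrow> 'b::euclidean_space) \<Rightarrow> 'a set \<Rightarrow> 'b set \<Rightarrow> bool" where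
  "diffeomorphism_onto f S T \<longleftrightarrow>
     inj_on f S \<and> f ` S = T \<and> smooth_map_on S f \<and> smooth_map_on T (inv_into S f)"

definition critical_point :: "('a::euclidean_space \<Rightarrow> real) \<Rightarrow> 'a \<Rightarrow> bool" where
  "critical_point f x \<longleftrightarrow> \<not> (\<exists>D. (f has_derivative D) (at x) \<and> surj D)"

text \<open>Nondegenerate: the Hessian (derivative at x of the gradient) is invertible.\<close>
definition nondegenerate_critical_point :: "('a::euclidean_space \<Rightarrow> real) \<Rightarrow> 'a \<Rightarrow> bool" where
  "nondegenerate_critical_point f x \<longleftrightarrow> critical_point f x \<and>
     (\<exists>U grad H. open U \<and> x \<in> U \<and>
        (\<forall>y\<in>U. (f has_derivative (\<lambda>v. grad y \<bullet> v)) (at y)) \<and>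
        (grad has_derivative H) (at x) \<and> inj H)"

definition regular_value :: "('a::euclidean_space \<Rightarrow> real) \<Rightarrow> real \<Rightarrow> bool" where
  "regular_value f c \<longleftrightarrow> (\<forall>x. f x = c \<longrightarrow> \<not> critical_point f x)"

text \<open>Coordinates of complex^'n are grouped into blocks by blk :: 'n \<Rightarrow> nat with
values in 1..k; block i is C^(n_i), n_i = card {j. blk j = i}.  Blocks i \<le> s form
V+, blocks i > s form V-.  kappa i is the weight of block i.\<close>

definition zplus :: "('n::finite \<Rightarrow> nat) \<Rightarrow> nat \<Rightarrow> complex^'n \<Rightarrow> complex^'n" where
  "zplus blk s z = (\<chi> j. if blk j \<le> s then z $ j else 0)"

definition zminus :: "('n::finite \<Rightarrow> nat) \<Rightarrow> nat \<Rightarrow> complex^'n \<Rightarrow> complex^'n" where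
  "zminus blk s z = (\<chi> j. if blk j \<le> s then 0 else z $ j)"

definition sqn_plus :: "(nat \<Rightarrow> int) \<Rightarrow> ('n::finite \<Rightarrow> nat) \<Rightarrow> nat \<Rightarrow> complex^'n \<Rightarrow> real" where
  "sqn_plus \<kappa> blk s z = (\<Sum>j\<in>{j. blk j \<le> s}. real_of_int (\<kappa> (blk j)) * (cmod (z $ j))\<^sup>2)"

definition sqn_minus :: "(nat \<Rightarrow> int) \<Rightarrow> ('n::finite \<Rightarrow> nat) \<Rightarrow> nat \<Rightarrow> complex^'n \<Rightarrow> real" where
  "sqn_minus \<kappa> blk s z = (\<Sum>j\<in>{j. s < blk j}. real_of_int \<bar>\<kappa> (blk j)\<bar> * (cmod (z $ j))\<^sup>2)"

definition Phi :: "(nat \<Rightarrow> int) \<Rightarrow> ('n::finite \<Rightarrow> nat) \<Rightarrow> nat \<Rightarrow> complex^'n \<Rightarrow> real" where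
  "Phi \<kappa> blk s z = sqn_plus \<kappa> blk s z - sqn_minus \<kappa> blk s z"

definition Phi_tilde :: "(nat \<Rightarrow> int) \<Rightarrow> ('n::finite \<Rightarrow> nat) \<Rightarrow> nat \<Rightarrow> real \<Rightarrow> (real \<Rightarrow> real)
    \<Rightarrow> complex^'n \<Rightarrow> real" where
  "Phi_tilde \<kappa> blk s \<epsilon> \<rho> z =
     sqn_plus \<kappa> blk s z - sqn_minus \<kappa> blk s z + \<epsilon> * \<rho> (sqn_plus \<kappa> blk s z + sqn_minus \<kappa> blk s z)"

definition psi :: "(nat \<Rightarrow> int) \<Rightarrow> ('n::finite \<Rightarrow> nat) \<Rightarrow> nat \<Rightarrow> complex^'n \<Rightarrow> complex^'n" where
  "psi \<kappa> blk s z =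
     (if zplus blk s z \<noteq> 0 \<and> zminus blk s z \<noteq> 0 then
        ((sqn_minus \<kappa> blk s z / sqn_plus \<kappa> blk s z) powr (1/4)) *\<^sub>R zplus blk s z
      + ((sqn_plus \<kappa> blk s z / sqn_minus \<kappa> blk s z) powr (1/4)) *\<^sub>R zminus blk s z
      else 0)"

definition cadjoint :: "complex^'n^'n \<Rightarrow> complex^'n^'n" where
  "cadjoint A = (\<chi> i j. cnj (A $ j $ i))"

text \<open>G = prod U(n_i): block-diagonal unitary matrices.\<close>
definition G_set :: "('n::finite \<Rightarrow> nat) \<Rightarrow> (complex^'n^'n) set" where
  "G_set blk = {A. cadjoint A ** A = mat 1 \<and> (\<forall>i j. blk i \<noteq> blk j \<longrightarrow> A $ i $ j = 0)}"

definition s1_act :: "(nat \<Rightarrow> int) \<Rightarrow> ('n::finite \<Rightarrow> nat) \<Rightarrow> complex \<Rightarrow> complex^'n \<Rightarrow> complex^'n" where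
  "s1_act \<kappa> blk lam z = (\<chi> j. lam powi \<kappa> (blk j) * z $ j)"

definition GS1_act :: "(nat \<Rightarrow> int) \<Rightarrow> ('n::finite \<Rightarrow> nat) \<Rightarrow> complex^'n^'n \<Rightarrow> complex
    \<Rightarrow> complex^'n \<Rightarrow> complex^'n" where
  "GS1_act \<kappa> blk A lam z = A *v s1_act \<kappa> blk lam z"

end

theory Submission
  imports Defs
begin

(*
  The weights make |z+|^2 and |z-|^2 invariant under G x S^1, and psi is assembled from them
  and from the projections to V+ and V-, which commute with the action; this gives the
  invariance and equivariance statements.

  In the directions z+ and z- the derivative of Phi~ at z equals 2|z+|^2 (1 + eps rho') and
  -2|z-|^2 (1 - eps rho'), and |eps rho'| < 1, so Phi~ has no critical point besides 0; near 0
  it is the nondegenerate quadratic form Phi + eps, and Phi~(0) = eps <> 0.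

  Writing t = |z+|^2 + |z-|^2, the level set Phi~ = 0 (minus the axes) is described by
  |z+|^2 = (t - eps rho t)/2 and |z-|^2 = (t + eps rho t)/2 with t > |eps|, and psi maps such
  a point to the point of the cone Phi = 0 with |w+|^2 = |w-|^2 = q where
  q^2 = |z+|^2 |z-|^2 = (t^2 - eps^2 rho(t)^2)/4. The right-hand side has derivative at least
  t/2 because rho >= 0 and rho' <= 0, so it is a diffeomorphism from (|eps|, oo) onto
  (0, oo). Its inverse recovers t, and hence the two rescaling factors, smoothly from w:
  this is the inverse of psi.
*)

section \<open>Smooth maps\<close>

lemma smooth_on_coinduct:
  fixes Q :: "('a::euclidean_space \<Rightarrow> 'b::euclidean_space) \<Rightarrow> bool"
  assumes "open U" and "Q f"
    and step: "\<And>g. Q g \<Longrightarrow> \<exists>g'. (\<forall>x\<in>U. (g has_derivative (\<lambda>v. g' v x)) (at x)) \<and> (\<forall>v. Q (g' v))"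
  shows "smooth_on U f"
proof -
  define der where "der g = (SOME g'. (\<forall>x\<in>U. (g has_derivative (\<lambda>v. g' v x)) (at x)) \<and> (\<forall>v. Q (g' v)))" for g
  have der: "(\<forall>x\<in>U. (g has_derivative (\<lambda>v. der g v x)) (at x)) \<and> (\<forall>v. Q (der g v))" if "Q g" for g
    unfolding der_def by (rule someI_ex[OF step[OF that]])
  define D where "D vs = foldr (\<lambda>v h. der h v) vs f" for vs
  have "Q (D vs)" for vs
    by (induction vs) (auto simp: D_def \<open>Q f\<close> dest: der)
  then show ?thesis
    unfolding smooth_on_def using \<open>open U\<close> der by (intro conjI exI[of _ D]) (auto simp: D_def)
qed

lemma smooth_onE:
  assumes "smooth_on U f"
  obtains f' where "\<forall>x\<in>U. (f has_derivative (\<lambda>v. f' v x)) (at x)" "\<forall>v. smooth_on U (f' v)"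
proof -
  from assms obtain D where U: "open U" and "D [] = f"
    and D: "\<And>vs x. x \<in> U \<Longrightarrow> (D vs has_derivative (\<lambda>v. D (v # vs) x)) (at x)"
    unfolding smooth_on_def by blast
  have "smooth_on U (D [v])" for v
    unfolding smooth_on_def using U D by (intro conjI exI[of _ "\<lambda>ws. D (ws @ [v])"]) auto
  with D[of _ "[]"] \<open>D [] = f\<close> show ?thesis by (intro that[of "\<lambda>v. D [v]"]) auto
qed

lemma smooth_on_open: "smooth_on U f \<Longrightarrow> open U"
  by (simp add: smooth_on_def)

lemma smooth_onI:
  assumes "open U" "\<forall>x\<in>U. (f has_derivative (\<lambda>v. f' v x)) (at x)" "\<forall>v. smooth_on U (f' v)"
  shows "smooth_on U f"
proof (rule smooth_on_coinduct[where Q="\<lambda>h. h = f \<or> smooth_on U h", OF \<open>open U\<close>])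
  fix g assume "g = f \<or> smooth_on U g"
  then show "\<exists>g'. (\<forall>x\<in>U. (g has_derivative (\<lambda>v. g' v x)) (at x)) \<and> (\<forall>v. g' v = f \<or> smooth_on U (g' v))"
  proof
    assume "smooth_on U g"
    then obtain g' where "\<forall>x\<in>U. (g has_derivative (\<lambda>v. g' v x)) (at x)" "\<forall>v. smooth_on U (g' v)"
      by (rule smooth_onE)
    then show ?thesis by blast
  qed (use assms in blast)
qed simp

lemma smooth_on_subset: "smooth_on U f \<Longrightarrow> open V \<Longrightarrow> V \<subseteq> U \<Longrightarrow> smooth_on V f"
  unfolding smooth_on_def by blast

lemma smooth_on_cong:
  assumes "smooth_on U f" "\<And>x. x \<in> U \<Longrightarrow> f x = g x"
  shows "smooth_on U g"
proof -
  have U: "open U" using assms smooth_on_open by blast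
  obtain f' where f': "\<forall>x\<in>U. (f has_derivative (\<lambda>v. f' v x)) (at x)" "\<forall>v. smooth_on U (f' v)"
    using assms(1) by (rule smooth_onE)
  show ?thesis
    using f' assms(2) has_derivative_transform_within_open[OF _ U]
    by (intro smooth_onI[OF U, of g f']) blast+
qed

lemma smooth_on_imp_continuous_on: "smooth_on U f \<Longrightarrow> continuous_on U f"
  by (elim smooth_onE) (meson continuous_at_imp_continuous_on has_derivative_continuous)

lemma smooth_on_const: "open U \<Longrightarrow> smooth_on U (\<lambda>x. c)"
  by (rule smooth_on_coinduct[where Q="\<lambda>h. \<exists>c. h = (\<lambda>x. c)"]) (auto intro!: exI[of _ "\<lambda>v x. 0"])

lemma smooth_on_bounded_linear: "open U \<Longrightarrow> bounded_linear L \<Longrightarrow> smooth_on U L"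
  by (rule smooth_onI[of U L "\<lambda>v x. L v"]) (auto intro: smooth_on_const bounded_linear_imp_has_derivative)

lemma smooth_on_id: "open U \<Longrightarrow> smooth_on U (\<lambda>x. x)"
  by (rule smooth_on_bounded_linear) (simp_all add: bounded_linear_ident)

text \<open>Smooth functions are closed under products; since the derivative of a product is a
  sum of products, the coinduction runs over sums of products.\<close>

inductive smooth_product_sum :: "'a::euclidean_space set \<Rightarrow> ('a \<Rightarrow> 'b::euclidean_space) \<Rightarrow> bool"
  for U where
  product: "smooth_on U (f::'a \<Rightarrow> real) \<Longrightarrow> smooth_on U g \<Longrightarrow> smooth_product_sum U (\<lambda>x. f x *\<^sub>R g x)"
| sum: "smooth_product_sum U a \<Longrightarrow> smooth_product_sum U b \<Longrightarrow> smooth_product_sum U (\<lambda>x. a x + b x)"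

lemma smooth_product_sum_smooth:
  assumes "open U" "smooth_product_sum U h"
  shows "smooth_on U h"
  using assms(1,2)
proof (rule smooth_on_coinduct)
  fix h assume "smooth_product_sum U h"
  then show "\<exists>h'. (\<forall>x\<in>U. (h has_derivative (\<lambda>v. h' v x)) (at x)) \<and> (\<forall>v. smooth_product_sum U (h' v))"
  proof induction
    case (product f g)
    obtain f' where f': "\<forall>x\<in>U. (f has_derivative (\<lambda>v. f' v x)) (at x)" "\<forall>v. smooth_on U (f' v)"
      using product(1) by (rule smooth_onE)
    obtain g' where g': "\<forall>x\<in>U. (g has_derivative (\<lambda>v. g' v x)) (at x)" "\<forall>v. smooth_on U (g' v)"
      using product(2) by (rule smooth_onE)
    show ?case
      using f' g' product
      by (intro exI[of _ "\<lambda>v x. f x *\<^sub>R g' v x + f' v x *\<^sub>R g x"])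
        (auto intro!: has_derivative_scaleR smooth_product_sum.intros)
  next
    case (sum a b)
    then obtain a' b' where
      "\<forall>x\<in>U. (a has_derivative (\<lambda>v. a' v x)) (at x)" "\<forall>v. smooth_product_sum U (a' v)"
      "\<forall>x\<in>U. (b has_derivative (\<lambda>v. b' v x)) (at x)" "\<forall>v. smooth_product_sum U (b' v)"
      by blast
    then show ?case
      by (intro exI[of _ "\<lambda>v x. a' v x + b' v x"]) (auto intro!: has_derivative_add smooth_product_sum.intros)
  qed
qed

lemma smooth_on_scaleR:
  fixes f :: "'a::euclidean_space \<Rightarrow> real" and g :: "'a \<Rightarrow> 'b::euclidean_space"
  assumes "smooth_on U f" "smooth_on U g"
  shows "smooth_on U (\<lambda>x. f x *\<^sub>R g x)"
  using smooth_product_sum_smooth[OF smooth_on_open[OF assms(1)] smooth_product_sum.product[OF assms]] .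

lemma smooth_on_add:
  fixes f g :: "'a::euclidean_space \<Rightarrow> 'b::euclidean_space"
  assumes "smooth_on U f" "smooth_on U g"
  shows "smooth_on U (\<lambda>x. f x + g x)"
proof -
  have U: "open U" using assms smooth_on_open by blast
  have "smooth_product_sum U (\<lambda>x. (\<lambda>_. 1) x *\<^sub>R f x + (\<lambda>_. 1) x *\<^sub>R g x)"
    using assms smooth_on_const[OF U] by (intro smooth_product_sum.intros)
  then show ?thesis using smooth_product_sum_smooth[OF U] by simp
qed

lemma smooth_on_mult:
  fixes f g :: "'a::euclidean_space \<Rightarrow> real"
  shows "smooth_on U f \<Longrightarrow> smooth_on U g \<Longrightarrow> smooth_on U (\<lambda>x. f x * g x)"
  using smooth_on_scaleR[of U f g] by simp

lemma smooth_on_scaleR_const: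
  fixes g :: "'a::euclidean_space \<Rightarrow> 'b::euclidean_space"
  assumes "smooth_on U g"
  shows "smooth_on U (\<lambda>x. c *\<^sub>R g x)"
  using smooth_on_scaleR[OF smooth_on_const[OF smooth_on_open[OF assms]] assms] .

lemma smooth_on_diff:
  fixes f g :: "'a::euclidean_space \<Rightarrow> 'b::euclidean_space"
  assumes "smooth_on U f" "smooth_on U g"
  shows "smooth_on U (\<lambda>x. f x - g x)"
  using smooth_on_add[OF assms(1) smooth_on_scaleR_const[OF assms(2), of "-1"]] by simp

lemma smooth_on_sum:
  assumes "open U" "\<And>i. i \<in> A \<Longrightarrow> smooth_on U (f i)"
  shows "smooth_on U (\<lambda>x. \<Sum>i\<in>A. f i x)"
  using assms(2)
  by (induction A rule: infinite_finite_induct) (auto intro: smooth_on_add smooth_on_const[OF assms(1)])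

lemma linear_real_scale: "linear (B :: real \<Rightarrow> 'b::real_vector) \<Longrightarrow> B v = v *\<^sub>R B 1"
  using linear_scale[of B v 1] by simp

lemma smooth_on_real_iff:
  fixes b :: "real \<Rightarrow> real"
  shows "smooth_on V b \<longleftrightarrow>
    open V \<and> (\<exists>b'. (\<forall>x\<in>V. (b has_real_derivative b' x) (at x)) \<and> smooth_on V b')"
proof safe
  assume b: "smooth_on V b"
  then show "open V" by (rule smooth_on_open)
  obtain f' where f': "\<forall>x\<in>V. (b has_derivative (\<lambda>v. f' v x)) (at x)" "\<forall>v. smooth_on V (f' v)"
    using b by (rule smooth_onE)
  have "(b has_real_derivative f' 1 x) (at x)" if "x \<in> V" for x
  proof -
    have "linear (\<lambda>v. f' v x)" using f'(1) that has_derivative_linear by blast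
    then have "f' v x = f' 1 x * v" for v
      using linear_real_scale[of "\<lambda>v. f' v x" v] by simp
    then have "(\<lambda>v. f' v x) = (*) (f' 1 x)" by (rule ext)
    then show ?thesis using f'(1) that unfolding has_field_derivative_def by metis
  qed
  then show "\<exists>b'. (\<forall>x\<in>V. (b has_real_derivative b' x) (at x)) \<and> smooth_on V b'"
    using f'(2) by blast
next
  fix b' assume "open V" and b': "\<forall>x\<in>V. (b has_real_derivative b' x) (at x)" "smooth_on V b'"
  have "(b has_derivative (\<lambda>v. b' x * v)) (at x)" if "x \<in> V" for x
    using b'(1) that by (simp add: has_field_derivative_def)
  then show "smooth_on V b"
    using smooth_on_mult[OF b'(2) smooth_on_const[OF \<open>open V\<close>]]
    by (intro smooth_onI[OF \<open>open V\<close>, of b "\<lambda>v x. b' x * v"]) auto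
qed

text \<open>The chain rule for a real-valued inner map \<open>\<phi>\<close>: the derivatives of \<open>b \<circ> \<phi>\<close> are sums of
  terms \<open>a x *\<^sub>R b' (\<phi> x)\<close> with \<open>a\<close> smooth on \<open>U\<close> and \<open>b'\<close> smooth on \<open>V\<close>.\<close>

inductive smooth_composition_sum ::
  "'a::euclidean_space set \<Rightarrow> real set \<Rightarrow> ('a \<Rightarrow> real) \<Rightarrow> ('a \<Rightarrow> 'b::euclidean_space) \<Rightarrow> bool"
  for U V \<phi> where
  composed: "smooth_on U (a::'a \<Rightarrow> real) \<Longrightarrow> smooth_on V b \<Longrightarrow> smooth_composition_sum U V \<phi> (\<lambda>x. a x *\<^sub>R b (\<phi> x))"
| sum: "smooth_composition_sum U V \<phi> f \<Longrightarrow> smooth_composition_sum U V \<phi> g \<Longrightarrow>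
    smooth_composition_sum U V \<phi> (\<lambda>x. f x + g x)"

lemma smooth_composition_sum_smooth:
  assumes "smooth_on U \<phi>" "\<phi> ` U \<subseteq> V" "smooth_composition_sum U V \<phi> h"
  shows "smooth_on U h"
  using smooth_on_open[OF assms(1)] assms(3)
proof (rule smooth_on_coinduct)
  obtain p' where p': "\<forall>x\<in>U. (\<phi> has_derivative (\<lambda>v. p' v x)) (at x)" "\<forall>v. smooth_on U (p' v)"
    using assms(1) by (rule smooth_onE)
  fix h assume "smooth_composition_sum U V \<phi> h"
  then show "\<exists>h'. (\<forall>x\<in>U. (h has_derivative (\<lambda>v. h' v x)) (at x)) \<and> (\<forall>v. smooth_composition_sum U V \<phi> (h' v))"
  proof induction
    case (composed a b)
    obtain a' where a': "\<forall>x\<in>U. (a has_derivative (\<lambda>v. a' v x)) (at x)" "\<forall>v. smooth_on U (a' v)"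
      using composed(1) by (rule smooth_onE)
    obtain b' where b': "\<forall>y\<in>V. (b has_derivative (\<lambda>w. b' w y)) (at y)" "\<forall>w. smooth_on V (b' w)"
      using composed(2) by (rule smooth_onE)
    have "((\<lambda>x. a x *\<^sub>R b (\<phi> x)) has_derivative
        (\<lambda>v. a' v x *\<^sub>R b (\<phi> x) + (a x * p' v x) *\<^sub>R b' 1 (\<phi> x))) (at x)" if x: "x \<in> U" for x
    proof -
      have y: "\<phi> x \<in> V" using x assms(2) by blast
      have "linear (\<lambda>w. b' w (\<phi> x))" using b'(1)[rule_format, OF y] has_derivative_linear by blast
      then have "b' (p' v x) (\<phi> x) = p' v x *\<^sub>R b' 1 (\<phi> x)" for v
        by (rule linear_real_scale)
      then have "((\<lambda>x. b (\<phi> x)) has_derivative (\<lambda>v. p' v x *\<^sub>R b' 1 (\<phi> x))) (at x)"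
        using has_derivative_compose[OF p'(1)[rule_format, OF x] b'(1)[rule_format, OF y]] by (simp add: o_def)
      from has_derivative_scaleR[OF a'(1)[rule_format, OF x] this] show ?thesis
        by (simp add: algebra_simps)
    qed
    moreover have "smooth_composition_sum U V \<phi> (\<lambda>x. a' v x *\<^sub>R b (\<phi> x) + (a x * p' v x) *\<^sub>R b' 1 (\<phi> x))" for v
      using a'(2) b'(2) p'(2) composed by (intro smooth_composition_sum.intros smooth_on_mult) simp_all
    ultimately show ?case
      by (intro exI[of _ "\<lambda>v x. a' v x *\<^sub>R b (\<phi> x) + (a x * p' v x) *\<^sub>R b' 1 (\<phi> x)"]) auto
  next
    case (sum f g)
    then obtain f' g' where
      "\<forall>x\<in>U. (f has_derivative (\<lambda>v. f' v x)) (at x)" "\<forall>v. smooth_composition_sum U V \<phi> (f' v)"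
      "\<forall>x\<in>U. (g has_derivative (\<lambda>v. g' v x)) (at x)" "\<forall>v. smooth_composition_sum U V \<phi> (g' v)"
      by blast
    then show ?case
      by (intro exI[of _ "\<lambda>v x. f' v x + g' v x"])
        (auto intro!: has_derivative_add smooth_composition_sum.intros)
  qed
qed

lemma smooth_on_compose:
  fixes \<phi> :: "'a::euclidean_space \<Rightarrow> real" and b :: "real \<Rightarrow> 'b::euclidean_space"
  assumes "smooth_on U \<phi>" "smooth_on V b" "\<phi> ` U \<subseteq> V"
  shows "smooth_on U (\<lambda>x. b (\<phi> x))"
proof -
  have "smooth_composition_sum U V \<phi> (\<lambda>x. (\<lambda>_. 1) x *\<^sub>R b (\<phi> x))"
    using smooth_on_const[OF smooth_on_open[OF assms(1)]] assms(2)
    by (rule smooth_composition_sum.composed)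
  then show ?thesis using smooth_composition_sum_smooth[OF assms(1,3)] by simp
qed

lemma smooth_on_powr: "smooth_on {0<..} (\<lambda>x::real. c * x powr r)"
proof (rule smooth_on_coinduct[where Q="\<lambda>h. \<exists>c r. h = (\<lambda>x::real. c * x powr r)"])
  fix g :: "real \<Rightarrow> real" assume "\<exists>c r. g = (\<lambda>x. c * x powr r)"
  then obtain c r where g: "g = (\<lambda>x. c * x powr r)" by blast
  have "(g has_derivative (\<lambda>v. (v * c * r) * x powr (r - 1))) (at x)" if "x > 0" for x
  proof -
    have "(g has_real_derivative c * (r * x powr (r - 1))) (at x)"
      unfolding g using that by (auto intro!: derivative_eq_intros)
    then show ?thesis
      unfolding has_field_derivative_def by (rule has_derivative_eq_rhs) (auto simp: fun_eq_iff)
  qed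
  then show "\<exists>g'. (\<forall>x\<in>{0<..}. (g has_derivative (\<lambda>v. g' v x)) (at x)) \<and>
      (\<forall>v. \<exists>c r. g' v = (\<lambda>x. c * x powr r))"
    by (intro exI[of _ "\<lambda>v x. (v * c * r) * x powr (r - 1)"]) auto
qed auto

lemma smooth_on_powr_compose:
  fixes f :: "'a::euclidean_space \<Rightarrow> real"
  assumes "smooth_on U f" "\<And>x. x \<in> U \<Longrightarrow> f x > 0"
  shows "smooth_on U (\<lambda>x. f x powr r)"
  using smooth_on_compose[OF assms(1) smooth_on_powr[of 1 r]] assms(2) by auto

lemma smooth_on_quotient_powr:
  fixes f g :: "'a::euclidean_space \<Rightarrow> real"
  assumes "smooth_on U f" "smooth_on U g" "\<forall>x\<in>U. 0 < f x \<and> 0 < g x"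
  shows "smooth_on U (\<lambda>x. (f x / g x) powr r)"
proof -
  have "0 < f x * g x powr -1" if "x \<in> U" for x using assms(3) that by (intro mult_pos_pos) auto
  then have "smooth_on U (\<lambda>x. (f x * g x powr -1) powr r)"
    using assms by (intro smooth_on_powr_compose smooth_on_mult) auto
  then show ?thesis
    by (rule smooth_on_cong) (use assms(3) in \<open>auto simp: powr_minus divide_inverse abs_of_pos\<close>)
qed

lemma quarter_powr_square: "0 \<le> x \<Longrightarrow> (x powr (1/4))\<^sup>2 = sqrt (x::real)"
  by (simp add: power2_eq_square powr_add[symmetric] powr_half_sqrt[symmetric])

lemma powr_divide_mult_swap: "0 < x \<Longrightarrow> 0 < y \<Longrightarrow> (x / y) powr r * (y / x) powr r = (1::real)"
  by (simp add: powr_mult[symmetric])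

lemma inverse_function_has_real_derivative:
  fixes \<phi> \<phi>' g :: "real \<Rightarrow> real"
  assumes I: "open I" and J: "open J" and q: "q \<in> J"
    and der: "\<And>t. t \<in> I \<Longrightarrow> (\<phi> has_real_derivative \<phi>' t) (at t)"
    and pos: "\<And>t. t \<in> I \<Longrightarrow> \<phi>' t > 0"
    and left: "\<And>t. t \<in> I \<Longrightarrow> g (\<phi> t) = t"
    and right: "\<And>q. q \<in> J \<Longrightarrow> g q \<in> I \<and> \<phi> (g q) = q"
  shows "(g has_real_derivative inverse (\<phi>' (g q))) (at q)"
proof -
  obtain d where d: "d > 0" "cball (g q) d \<subseteq> I" using I right[OF q] open_contains_cball by blast
  then have near: "\<bar>z - g q\<bar> \<le> d \<Longrightarrow> z \<in> I" for z by (auto simp: dist_real_def subset_iff)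
  have "isCont g (\<phi> (g q))"
  proof (rule isCont_inverse_function[where f=\<phi> and x="g q", OF d(1)])
    fix z assume "\<bar>z - g q\<bar> \<le> d"
    then show "g (\<phi> z) = z" "isCont \<phi> z" using near left der DERIV_isCont by blast+
  qed
  then have "isCont g q" using right[OF q] by simp
  obtain e where e: "e > 0" "ball q e \<subseteq> J" using J q open_contains_ball by blast
  show ?thesis
  proof (rule DERIV_inverse_function[where a="q - e" and b="q + e"])
    show "(\<phi> has_real_derivative \<phi>' (g q)) (at (g q))" using der right q by blast
    show "\<phi>' (g q) \<noteq> 0" using pos right q by force
    show "q - e < q" "q < q + e" using e by auto
    fix y assume "q - e < y" "y < q + e"
    then have "y \<in> J" using e(2) by (auto simp: dist_real_def subset_iff)
    then show "\<phi> (g y) = y" using right by blast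
  qed fact
qed

text \<open>The derivatives of \<open>g\<close> are of the form \<open>R \<circ> g\<close> with \<open>R\<close> smooth, since
  \<open>(R \<circ> g)' = (R' / \<phi>') \<circ> g\<close>.\<close>

lemma smooth_on_inverse_function:
  fixes \<phi> \<phi>' g :: "real \<Rightarrow> real"
  assumes I: "open I" and J: "open J"
    and der: "\<And>t. t \<in> I \<Longrightarrow> (\<phi> has_real_derivative \<phi>' t) (at t)"
    and "smooth_on I \<phi>'" and pos: "\<And>t. t \<in> I \<Longrightarrow> \<phi>' t > 0"
    and left: "\<And>t. t \<in> I \<Longrightarrow> g (\<phi> t) = t"
    and right: "\<And>q. q \<in> J \<Longrightarrow> g q \<in> I \<and> \<phi> (g q) = q"
  shows "smooth_on J g"
proof -
  let ?Q = "\<lambda>h. \<exists>R::real\<Rightarrow>real. smooth_on I R \<and> h = (\<lambda>q. R (g q))"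
  show ?thesis
  proof (rule smooth_on_coinduct[where Q="?Q", OF J])
    show "?Q g" using smooth_on_id[OF I] by blast
  next
    fix h assume "?Q h"
    then obtain R where R: "smooth_on I R" "h = (\<lambda>q. R (g q))" by blast
    obtain R' where R': "\<forall>t\<in>I. (R has_real_derivative R' t) (at t)" "smooth_on I R'"
      using R(1) smooth_on_real_iff by blast
    define S where "S t = R' t * \<phi>' t powr (-1)" for t
    have "smooth_on I S"
      unfolding S_def using pos by (intro smooth_on_mult R'(2) smooth_on_powr_compose assms(4))
    moreover have "(h has_real_derivative S (g q)) (at q)" if "q \<in> J" for q
    proof -
      have "\<phi>' (g q) > 0" using pos right that by blast
      then show ?thesis
        using DERIV_chain2[OF R'(1)[rule_format]
            inverse_function_has_real_derivative[OF I J that der pos left right]] right that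
        by (simp add: R(2) S_def powr_minus divide_inverse)
    qed
    moreover have "?Q (\<lambda>q. S (g q) * v)" for v
      using smooth_on_mult[OF \<open>smooth_on I S\<close> smooth_on_const[OF I, of v]] by blast
    ultimately show "\<exists>h'. (\<forall>q\<in>J. (h has_derivative (\<lambda>v. h' v q)) (at q)) \<and> (\<forall>v. ?Q (h' v))"
      by (intro exI[of _ "\<lambda>v q. S (g q) * v"]) (simp add: has_field_derivative_def)
  qed
qed

lemma smooth_map_on_restrict:
  assumes "open U" "S \<subseteq> U" "smooth_on U g" "\<And>y. y \<in> S \<Longrightarrow> g y = f y"
  shows "smooth_map_on S f"
  unfolding smooth_map_on_def using assms by blast

lemma diffeomorphism_ontoI:
  assumes "f ` S \<subseteq> T" "g ` T \<subseteq> S"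
    and "\<And>x. x \<in> S \<Longrightarrow> g (f x) = x" "\<And>y. y \<in> T \<Longrightarrow> f (g y) = y"
    and "smooth_map_on S f" "smooth_map_on T g"
  shows "diffeomorphism_onto f S T"
proof -
  have bij: "bij_betw f S T" using assms(1-4) by (intro bij_betw_byWitness[where f'=g]) auto
  then have "inv_into S f y = g y" if "y \<in> T" for y
    using assms(2,4) that by (intro inv_into_f_eq) (auto simp: bij_betw_def)
  then have "smooth_map_on T (inv_into S f)"
    using assms(6) unfolding smooth_map_on_def by (metis IntD1)
  with bij assms(5) show ?thesis by (simp add: diffeomorphism_onto_def bij_betw_def)
qed

lemma critical_point_iff_derivative_zero:
  assumes "(f has_derivative D) (at x)"
  shows "critical_point f x \<longleftrightarrow> (\<forall>v. D v = 0)"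
proof -
  have "linear D" using assms has_derivative_linear by blast
  have "surj D \<longleftrightarrow> (\<exists>v. D v \<noteq> 0)"
  proof
    assume "\<exists>v. D v \<noteq> 0"
    then obtain v where "D v \<noteq> 0" by blast
    then have "D ((y / D v) *\<^sub>R v) = y" for y using linear_scale[OF \<open>linear D\<close>] by simp
    then show "surj D" by (rule surjI)
  qed (metis UNIV_I image_iff zero_neq_one)
  moreover have "(\<exists>D'. (f has_derivative D') (at x) \<and> surj D') \<longleftrightarrow> surj D"
    using has_derivative_unique[OF _ assms] assms by blast
  ultimately show ?thesis unfolding critical_point_def by blast
qed

section \<open>Weighted norms and the action of \<open>G \<times> S\<^sup>1\<close>\<close>

lemma has_derivative_weighted_sqnorm:
  fixes z :: "'a::real_inner ^ 'n"
  shows "((\<lambda>z. \<Sum>j\<in>J. w j * (norm (z $ j))\<^sup>2) has_derivative (\<lambda>v. \<Sum>j\<in>J. w j * (2 * (z $ j \<bullet> v $ j)))) (at z)"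
proof -
  have "((\<lambda>z. z $ j \<bullet> z $ j) has_derivative (\<lambda>v. z $ j \<bullet> v $ j + v $ j \<bullet> z $ j)) (at z)" for j
    using bounded_linear_vec_nth[of j] by (intro has_derivative_inner bounded_linear_imp_has_derivative)
  then show ?thesis
    unfolding power2_norm_eq_inner
    by (intro has_derivative_sum has_derivative_mult_right) (simp add: inner_commute)
qed

lemma smooth_on_weighted_sqnorm:
  assumes "open U"
  shows "smooth_on U (\<lambda>z::complex^'n. \<Sum>j\<in>J. w j * (cmod (z $ j))\<^sup>2)"
proof -
  have re: "bounded_linear (\<lambda>z::complex^'n. Re (z $ j))" and im: "bounded_linear (\<lambda>z::complex^'n. Im (z $ j))" for j
    by (auto intro: bounded_linear_compose[OF _ bounded_linear_vec_nth] bounded_linear_Re bounded_linear_Im)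
  have "smooth_on U (\<lambda>z::complex^'n. w j * (Re (z $ j) * Re (z $ j) + Im (z $ j) * Im (z $ j)))" for j
    using assms re im
    by (intro smooth_on_mult smooth_on_const smooth_on_add smooth_on_bounded_linear)
  moreover have "Re x * Re x + Im x * Im x = (cmod x)\<^sup>2" for x
    by (subst cmod_power2) (simp add: power2_eq_square)
  ultimately show ?thesis by (intro smooth_on_sum[OF assms]) simp
qed

lemma unitary_columns_orthonormal:
  assumes "cadjoint A ** A = mat 1"
  shows "(\<Sum>j\<in>UNIV. cnj (A $ j $ m) * A $ j $ l) = (if m = l then 1 else 0)"
proof -
  have "(cadjoint A ** A) $ m $ l = mat 1 $ m $ l" using assms by simp
  then show ?thesis by (simp add: matrix_matrix_mult_def cadjoint_def mat_def)
qed

lemma weighted_sqnorm_block_unitary_invariant: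
  fixes w :: "nat \<Rightarrow> real" and A :: "complex^'n::finite^'n"
  assumes "A \<in> G_set blk"
  shows "(\<Sum>j\<in>UNIV. w (blk j) * (cmod ((A *v z) $ j))\<^sup>2) = (\<Sum>j\<in>UNIV. w (blk j) * (cmod (z $ j))\<^sup>2)"
proof -
  have U: "cadjoint A ** A = mat 1" and block: "\<And>i j. blk i \<noteq> blk j \<Longrightarrow> A $ i $ j = 0"
    using assms by (auto simp: G_set_def)
  let ?c = "\<lambda>i. complex_of_real (w i)"
  let ?t = "\<lambda>j m l. A $ j $ l * z $ l * (cnj (A $ j $ m) * cnj (z $ m))"
  have "complex_of_real (\<Sum>j\<in>UNIV. w (blk j) * (cmod ((A *v z) $ j))\<^sup>2)
      = (\<Sum>j\<in>UNIV. ?c (blk j) * ((A *v z) $ j * cnj ((A *v z) $ j)))"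
    by (simp only: of_real_sum of_real_mult complex_norm_square)
  also have "\<dots> = (\<Sum>j\<in>UNIV. \<Sum>m\<in>UNIV. \<Sum>l\<in>UNIV. ?c (blk j) * ?t j m l)"
    by (simp add: matrix_vector_mult_def sum_distrib_left sum_distrib_right mult_ac)
  also have "\<dots> = (\<Sum>j\<in>UNIV. \<Sum>m\<in>UNIV. \<Sum>l\<in>UNIV. ?c (blk l) * ?t j m l)"
    \<comment> \<open>\<open>A\<close> is block diagonal, so only entries with \<open>blk j = blk l\<close> contribute\<close>
    by (intro sum.cong refl) (metis block mult_eq_0_iff)
  also have "\<dots> = (\<Sum>l\<in>UNIV. \<Sum>m\<in>UNIV. ?c (blk l) * z $ l * cnj (z $ m) * (\<Sum>j\<in>UNIV. cnj (A $ j $ m) * A $ j $ l))"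
    by (subst sum.swap, subst (2) sum.swap, subst sum.swap) (simp add: sum_distrib_left mult_ac)
  also have "\<dots> = (\<Sum>l\<in>UNIV. \<Sum>m\<in>UNIV. if m = l then ?c (blk l) * z $ l * cnj (z $ l) else 0)"
    by (simp add: unitary_columns_orthonormal[OF U] if_distrib cong: if_cong)
  also have "\<dots> = (\<Sum>l\<in>UNIV. ?c (blk l) * (z $ l * cnj (z $ l)))"
    by (simp add: mult_ac)
  also have "\<dots> = complex_of_real (\<Sum>j\<in>UNIV. w (blk j) * (cmod (z $ j))\<^sup>2)"
    by (simp only: of_real_sum of_real_mult complex_norm_square)
  finally show ?thesis using of_real_eq_iff by blast
qed

locale block_weights =
  fixes \<kappa> :: "nat \<Rightarrow> int" and blk :: "'n::finite \<Rightarrow> nat" and k s :: nat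
  assumes blk_range: "\<forall>j. blk j \<in> {1..k}"
    and kappa_pos: "\<forall>i\<in>{1..s}. \<kappa> i > 0"
    and kappa_neg: "\<forall>i\<in>{s<..k}. \<kappa> i < 0"
begin

abbreviation "P \<equiv> sqn_plus \<kappa> blk s"
abbreviation "M \<equiv> sqn_minus \<kappa> blk s"
abbreviation "zp \<equiv> zplus blk s"
abbreviation "zm \<equiv> zminus blk s"

lemma kappa_plus_pos: "blk j \<le> s \<Longrightarrow> \<kappa> (blk j) > 0"
  using blk_range kappa_pos by force

lemma kappa_minus_neg: "s < blk j \<Longrightarrow> \<kappa> (blk j) < 0"
  using blk_range kappa_neg by force

lemma zplus_nth [simp]: "zp z $ j = (if blk j \<le> s then z $ j else 0)"
  by (simp add: zplus_def)

lemma zminus_nth [simp]: "zm z $ j = (if blk j \<le> s then 0 else z $ j)"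
  by (simp add: zminus_def)

lemma zplus_zero [simp]: "zp 0 = 0" and zminus_zero [simp]: "zm 0 = 0"
  by (simp_all add: vec_eq_iff)

lemma zplus_add_zminus: "zp z + zm z = z"
  by (simp add: vec_eq_iff)

lemma bounded_linear_zplus: "bounded_linear zp"
  unfolding linear_conv_bounded_linear[symmetric] by (rule linearI) (simp_all add: vec_eq_iff)

lemma bounded_linear_zminus: "bounded_linear zm"
  unfolding linear_conv_bounded_linear[symmetric] by (rule linearI) (simp_all add: vec_eq_iff)

lemma sqn_plus_eq_0_iff: "P z = 0 \<longleftrightarrow> zp z = 0"
proof -
  have "P z = 0 \<longleftrightarrow> (\<forall>j\<in>{j. blk j \<le> s}. real_of_int (\<kappa> (blk j)) * (cmod (z $ j))\<^sup>2 = 0)"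
    unfolding sqn_plus_def
    by (rule sum_nonneg_eq_0_iff) (auto dest: kappa_plus_pos intro!: mult_nonneg_nonneg)
  also have "\<dots> \<longleftrightarrow> zp z = 0"
    by (auto simp: vec_eq_iff) (metis kappa_plus_pos less_irrefl)
  finally show ?thesis .
qed

lemma sqn_minus_eq_0_iff: "M z = 0 \<longleftrightarrow> zm z = 0"
proof -
  have "M z = 0 \<longleftrightarrow> (\<forall>j\<in>{j. s < blk j}. real_of_int \<bar>\<kappa> (blk j)\<bar> * (cmod (z $ j))\<^sup>2 = 0)"
    unfolding sqn_minus_def by (rule sum_nonneg_eq_0_iff) auto
  also have "\<dots> \<longleftrightarrow> zm z = 0"
    by (auto simp: vec_eq_iff not_le) (metis kappa_minus_neg less_irrefl)
  finally show ?thesis .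
qed

lemma sqn_plus_nonneg: "P z \<ge> 0"
  unfolding sqn_plus_def by (intro sum_nonneg) (auto dest: kappa_plus_pos)

lemma sqn_minus_nonneg: "M z \<ge> 0"
  unfolding sqn_minus_def by (intro sum_nonneg) auto

lemma sqn_plus_pos_iff: "P z > 0 \<longleftrightarrow> zp z \<noteq> 0"
  using sqn_plus_nonneg[of z] sqn_plus_eq_0_iff[of z] by linarith

lemma sqn_minus_pos_iff: "M z > 0 \<longleftrightarrow> zm z \<noteq> 0"
  using sqn_minus_nonneg[of z] sqn_minus_eq_0_iff[of z] by linarith

lemma sqn_plus_zero [simp]: "P 0 = 0" and sqn_minus_zero [simp]: "M 0 = 0"
  by (simp_all add: sqn_plus_eq_0_iff sqn_minus_eq_0_iff vec_eq_iff)

lemma Phi_eq_weighted_sqnorm: "Phi \<kappa> blk s z = (\<Sum>j\<in>UNIV. real_of_int (\<kappa> (blk j)) * (cmod (z $ j))\<^sup>2)"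
proof -
  have "(\<Sum>j\<in>UNIV. real_of_int (\<kappa> (blk j)) * (cmod (z $ j))\<^sup>2)
      = P z + (\<Sum>j\<in>{j. s < blk j}. real_of_int (\<kappa> (blk j)) * (cmod (z $ j))\<^sup>2)"
    unfolding sqn_plus_def
    by (subst sum.union_disjoint[symmetric]) (auto intro!: sum.cong)
  also have "(\<Sum>j\<in>{j. s < blk j}. real_of_int (\<kappa> (blk j)) * (cmod (z $ j))\<^sup>2) = - M z"
    unfolding sqn_minus_def sum_negf[symmetric]
    by (rule sum.cong) (auto dest: kappa_minus_neg)
  finally show ?thesis by (simp add: Phi_def)
qed

lemma sqn_plus_block_sum:
  "P z = (\<Sum>j\<in>UNIV. (if blk j \<le> s then real_of_int (\<kappa> (blk j)) else 0) * (cmod (z $ j))\<^sup>2)"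
  by (simp add: sqn_plus_def if_distrib[of "\<lambda>x. x * _"] sum.If_cases Collect_conj_eq cong: if_cong)

lemma sqn_minus_block_sum:
  "M z = (\<Sum>j\<in>UNIV. (if s < blk j then real_of_int \<bar>\<kappa> (blk j)\<bar> else 0) * (cmod (z $ j))\<^sup>2)"
  by (simp add: sqn_minus_def if_distrib[of "\<lambda>x. x * _"] sum.If_cases Collect_conj_eq cong: if_cong)

lemma norm_s1_act: "cmod lam = 1 \<Longrightarrow> cmod (s1_act \<kappa> blk lam z $ j) = cmod (z $ j)"
  by (simp add: s1_act_def norm_mult norm_power_int)

lemma sqn_plus_GS1_act: "A \<in> G_set blk \<Longrightarrow> cmod lam = 1 \<Longrightarrow> P (GS1_act \<kappa> blk A lam z) = P z"
  unfolding sqn_plus_block_sum GS1_act_def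
  by (simp add: weighted_sqnorm_block_unitary_invariant[where w="\<lambda>i. if i \<le> s then of_int (\<kappa> i) else 0"]
      norm_s1_act)

lemma sqn_minus_GS1_act: "A \<in> G_set blk \<Longrightarrow> cmod lam = 1 \<Longrightarrow> M (GS1_act \<kappa> blk A lam z) = M z"
  unfolding sqn_minus_block_sum GS1_act_def
  by (simp add: weighted_sqnorm_block_unitary_invariant[where w="\<lambda>i. if s < i then of_int \<bar>\<kappa> i\<bar> else 0"]
      norm_s1_act)

lemma linear_GS1_act: "linear (GS1_act \<kappa> blk A lam)"
proof -
  have "linear (s1_act \<kappa> blk lam)"
    by (rule linearI) (auto simp: s1_act_def vec_eq_iff algebra_simps scaleR_conv_of_real)
  then show ?thesis
    unfolding GS1_act_def[abs_def] using linear_compose[of "s1_act \<kappa> blk lam" "(*v) A"]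
    by (simp add: o_def)
qed

lemma zplus_GS1_act:
  assumes "A \<in> G_set blk"
  shows "zp (GS1_act \<kappa> blk A lam z) = GS1_act \<kappa> blk A lam (zp z)"
proof -
  have block: "\<And>i j. blk i \<noteq> blk j \<Longrightarrow> A $ i $ j = 0" using assms by (auto simp: G_set_def)
  have "(A *v zp y) $ j = (if blk j \<le> s then (A *v y) $ j else 0)" for y j
    by (cases "blk j \<le> s") (auto simp: matrix_vector_mult_def block intro!: sum.cong sum.neutral)
  then have "zp (A *v y) = A *v zp y" for y by (simp add: vec_eq_iff)
  moreover have "zp (s1_act \<kappa> blk lam y) = s1_act \<kappa> blk lam (zp y)" for y
    by (simp add: vec_eq_iff s1_act_def)
  ultimately show ?thesis by (simp add: GS1_act_def)
qed

lemma zminus_GS1_act: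
  assumes "A \<in> G_set blk"
  shows "zm (GS1_act \<kappa> blk A lam z) = GS1_act \<kappa> blk A lam (zm z)"
proof -
  have block: "\<And>i j. blk i \<noteq> blk j \<Longrightarrow> A $ i $ j = 0" using assms by (auto simp: G_set_def)
  have "(A *v zm y) $ j = (if blk j \<le> s then 0 else (A *v y) $ j)" for y j
    by (cases "blk j \<le> s") (auto simp: matrix_vector_mult_def block intro!: sum.cong sum.neutral)
  then have "zm (A *v y) = A *v zm y" for y by (simp add: vec_eq_iff)
  moreover have "zm (s1_act \<kappa> blk lam y) = s1_act \<kappa> blk lam (zm y)" for y
    by (simp add: vec_eq_iff s1_act_def)
  ultimately show ?thesis by (simp add: GS1_act_def)
qed

definition rescale :: "real \<Rightarrow> real \<Rightarrow> complex^'n \<Rightarrow> complex^'n" where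
  "rescale a b z = a *\<^sub>R zp z + b *\<^sub>R zm z"

lemma zplus_rescale [simp]: "zp (rescale a b z) = a *\<^sub>R zp z"
  and zminus_rescale [simp]: "zm (rescale a b z) = b *\<^sub>R zm z"
  by (simp_all add: rescale_def vec_eq_iff)

lemma sqn_plus_rescale: "P (rescale a b z) = a\<^sup>2 * P z"
  unfolding sqn_plus_def sum_distrib_left
  by (rule sum.cong) (auto simp: rescale_def power_mult_distrib)

lemma sqn_minus_rescale: "M (rescale a b z) = b\<^sup>2 * M z"
  unfolding sqn_minus_def sum_distrib_left
  by (rule sum.cong) (auto simp: rescale_def power_mult_distrib)

lemma rescale_rescale: "rescale a b (rescale c d z) = rescale (a * c) (b * d) z"
  by (simp add: rescale_def vec_eq_iff)

lemma rescale_1_1: "rescale 1 1 z = z"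
  by (simp add: rescale_def zplus_add_zminus)

lemma rescale_GS1_act:
  "A \<in> G_set blk \<Longrightarrow> rescale a b (GS1_act \<kappa> blk A lam z) = GS1_act \<kappa> blk A lam (rescale a b z)"
  using linear_GS1_act[of A lam]
  by (simp add: rescale_def zplus_GS1_act zminus_GS1_act linear_add linear_scale)

lemma psi_eq_rescale:
  "zp z \<noteq> 0 \<Longrightarrow> zm z \<noteq> 0 \<Longrightarrow>
    psi \<kappa> blk s z = rescale ((M z / P z) powr (1/4)) ((P z / M z) powr (1/4)) z"
  by (simp add: psi_def rescale_def)

lemma psi_eq_0_iff: "psi \<kappa> blk s z = 0 \<longleftrightarrow> zp z = 0 \<or> zm z = 0"
proof (cases "zp z = 0 \<or> zm z = 0")
  case False
  then have "P z > 0" "M z > 0" by (simp_all add: sqn_plus_pos_iff sqn_minus_pos_iff)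
  then have "zp (psi \<kappa> blk s z) \<noteq> 0" using False by (simp add: psi_eq_rescale)
  then show ?thesis using False by auto
qed (auto simp: psi_def)

lemma psi_GS1_act:
  assumes "A \<in> G_set blk" "cmod lam = 1"
  shows "psi \<kappa> blk s (GS1_act \<kappa> blk A lam z) = GS1_act \<kappa> blk A lam (psi \<kappa> blk s z)"
proof (cases "zp z = 0 \<or> zm z = 0")
  case True
  then have "zp (GS1_act \<kappa> blk A lam z) = 0 \<or> zm (GS1_act \<kappa> blk A lam z) = 0"
    using linear_0[OF linear_GS1_act] by (auto simp: zplus_GS1_act[OF assms(1)] zminus_GS1_act[OF assms(1)])
  with True have "psi \<kappa> blk s (GS1_act \<kappa> blk A lam z) = 0" "psi \<kappa> blk s z = 0"
    by (simp_all add: psi_eq_0_iff)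
  then show ?thesis using linear_0[OF linear_GS1_act] by simp
next
  case False
  then have "zp (GS1_act \<kappa> blk A lam z) \<noteq> 0" "zm (GS1_act \<kappa> blk A lam z) \<noteq> 0"
    by (simp_all add: sqn_plus_pos_iff[symmetric] sqn_minus_pos_iff[symmetric]
        sqn_plus_GS1_act[OF assms] sqn_minus_GS1_act[OF assms])
  with False show ?thesis
    by (simp add: psi_eq_rescale sqn_plus_GS1_act[OF assms] sqn_minus_GS1_act[OF assms]
        rescale_GS1_act[OF assms(1)])
qed

lemma sqn_plus_psi: "P (psi \<kappa> blk s z) = sqrt (P z * M z)"
  and sqn_minus_psi: "M (psi \<kappa> blk s z) = sqrt (P z * M z)"
proof -
  have "P (psi \<kappa> blk s z) = sqrt (P z * M z) \<and> M (psi \<kappa> blk s z) = sqrt (P z * M z)"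
  proof (cases "zp z = 0 \<or> zm z = 0")
    case False
    then have P: "P z > 0" and M: "M z > 0" by (simp_all add: sqn_plus_pos_iff sqn_minus_pos_iff)
    have "sqrt (M z / P z) * P z = sqrt (P z * M z)" "sqrt (P z / M z) * M z = sqrt (P z * M z)"
      using P M by (simp_all add: real_sqrt_divide real_sqrt_mult field_simps)
    with False P M show ?thesis
      by (simp add: psi_eq_rescale sqn_plus_rescale sqn_minus_rescale quarter_powr_square)
  qed (auto simp: psi_def sqn_plus_eq_0_iff sqn_minus_eq_0_iff)
  then show "P (psi \<kappa> blk s z) = sqrt (P z * M z)" "M (psi \<kappa> blk s z) = sqrt (P z * M z)"
    by simp_all
qed

definition dP :: "complex^'n \<Rightarrow> complex^'n \<Rightarrow> real" where
  "dP z v = (\<Sum>j\<in>{j. blk j \<le> s}. real_of_int (\<kappa> (blk j)) * (2 * (z $ j \<bullet> v $ j)))"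

definition dM :: "complex^'n \<Rightarrow> complex^'n \<Rightarrow> real" where
  "dM z v = (\<Sum>j\<in>{j. s < blk j}. real_of_int \<bar>\<kappa> (blk j)\<bar> * (2 * (z $ j \<bullet> v $ j)))"

lemma sqn_plus_has_derivative: "(P has_derivative dP z) (at z)"
  unfolding sqn_plus_def[abs_def] dP_def[abs_def] by (rule has_derivative_weighted_sqnorm)

lemma sqn_minus_has_derivative: "(M has_derivative dM z) (at z)"
  unfolding sqn_minus_def[abs_def] dM_def[abs_def] by (rule has_derivative_weighted_sqnorm)

lemma dP_zplus: "dP z (zp z) = 2 * P z" and dP_zminus: "dP z (zm z) = 0"
  and dM_zplus: "dM z (zp z) = 0" and dM_zminus: "dM z (zm z) = 2 * M z"
  and dP_zero: "dP 0 v = 0" and dM_zero: "dM 0 v = 0"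
  by (auto simp: dP_def dM_def sqn_plus_def sqn_minus_def sum_distrib_left power2_norm_eq_inner
      intro!: sum.cong sum.neutral)

lemma smooth_on_sqn_plus: "open U \<Longrightarrow> smooth_on U P"
  and smooth_on_sqn_minus: "open U \<Longrightarrow> smooth_on U M"
  unfolding sqn_plus_def[abs_def] sqn_minus_def[abs_def] by (simp_all add: smooth_on_weighted_sqnorm)

definition Phi_grad :: "complex^'n \<Rightarrow> complex^'n" where
  "Phi_grad z = (\<chi> j. (2 * real_of_int (\<kappa> (blk j))) *\<^sub>R z $ j)"

lemma Phi_has_derivative: "(Phi \<kappa> blk s has_derivative (\<lambda>v. Phi_grad z \<bullet> v)) (at z)"
proof -
  have grad: "(\<lambda>v. Phi_grad z \<bullet> v) = (\<lambda>v. \<Sum>j\<in>UNIV. real_of_int (\<kappa> (blk j)) * (2 * (z $ j \<bullet> v $ j)))"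
    by (simp add: fun_eq_iff Phi_grad_def inner_vec_def algebra_simps)
  show ?thesis
    unfolding grad Phi_eq_weighted_sqnorm[abs_def] by (rule has_derivative_weighted_sqnorm)
qed

lemma linear_Phi_grad: "linear Phi_grad"
  by (rule linearI) (auto simp: Phi_grad_def vec_eq_iff algebra_simps)

lemma inj_Phi_grad: "inj Phi_grad"
proof (rule injI)
  fix x y assume "Phi_grad x = Phi_grad y"
  moreover have "\<kappa> (blk j) \<noteq> 0" for j
    using kappa_plus_pos[of j] kappa_minus_neg[of j] by linarith
  ultimately show "x = y" by (auto simp: Phi_grad_def vec_eq_iff)
qed

lemma smooth_on_rescale:
  assumes "smooth_on U a" "smooth_on U b"
  shows "smooth_on U (\<lambda>z. rescale (a z) (b z) z)"
proof -
  have "smooth_on U zp" "smooth_on U zm"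
    using smooth_on_open[OF assms(1)] bounded_linear_zplus bounded_linear_zminus
    by (simp_all add: smooth_on_bounded_linear)
  then show ?thesis unfolding rescale_def using assms by (intro smooth_on_add smooth_on_scaleR)
qed

lemma open_sqn_plus_pos: "open {z. 0 < P z}" and open_sqn_minus_pos: "open {z. 0 < M z}"
  by (auto intro!: open_Collect_less smooth_on_imp_continuous_on smooth_on_sqn_plus smooth_on_sqn_minus
      smooth_on_const)

end

section \<open>The perturbed moment map\<close>

locale cutoff = block_weights \<kappa> blk k s for \<kappa> :: "nat \<Rightarrow> int" and blk :: "'n::finite \<Rightarrow> nat" and k s +
  fixes \<delta> \<epsilon> C :: real and \<rho> :: "real \<Rightarrow> real"
  assumes delta_pos: "\<delta> > 0"
    and rho_smooth: "smooth_on UNIV \<rho>"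
    and rho_one: "\<forall>t. t < \<delta> \<longrightarrow> \<rho> t = 1"
    and rho_zero: "\<forall>t. t > 2 * \<delta> \<longrightarrow> \<rho> t = 0"
    and rho_decr: "\<forall>t. deriv \<rho> t \<le> 0"
    and C_def: "C = (SUP t. \<bar>deriv \<rho> t\<bar>)"
    and eps_nz: "\<epsilon> \<noteq> 0"
    and eps_C: "\<bar>\<epsilon>\<bar> < inverse C"
    and eps_delta: "\<bar>\<epsilon>\<bar> < \<delta>"
begin

lemma rho_has_derivative: "(\<rho> has_real_derivative deriv \<rho> t) (at t)"
  and smooth_on_deriv_rho: "smooth_on UNIV (deriv \<rho>)"
proof -
  obtain \<rho>' where \<rho>': "\<forall>t. (\<rho> has_real_derivative \<rho>' t) (at t)" "smooth_on UNIV \<rho>'"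
    using rho_smooth smooth_on_real_iff by blast
  moreover from \<rho>'(1) have "deriv \<rho> = \<rho>'" using DERIV_imp_deriv by blast
  ultimately show "(\<rho> has_real_derivative deriv \<rho> t) (at t)" "smooth_on UNIV (deriv \<rho>)" by simp_all
qed

lemma rho_le_1: "\<rho> t \<le> 1"
proof -
  have "\<rho> t \<le> \<rho> (min t (\<delta>/2))"
    by (rule DERIV_nonpos_imp_nonincreasing[of _ t]) (use rho_has_derivative rho_decr in auto)
  then show ?thesis using rho_one delta_pos by simp
qed

lemma rho_nonneg: "\<rho> t \<ge> 0"
proof -
  have "\<rho> (max t (3 * \<delta>)) \<le> \<rho> t"
    by (rule DERIV_nonpos_imp_nonincreasing[of t]) (use rho_has_derivative rho_decr in auto)
  then show ?thesis using rho_zero delta_pos by simp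
qed

lemma abs_eps_rho_le: "\<bar>\<epsilon> * \<rho> t\<bar> \<le> \<bar>\<epsilon>\<bar>"
  using rho_nonneg[of t] rho_le_1[of t] by (simp add: abs_mult mult_left_le)

lemma deriv_rho_outside: "t < \<delta> \<or> 2 * \<delta> < t \<Longrightarrow> deriv \<rho> t = 0"
proof -
  assume "t < \<delta> \<or> 2 * \<delta> < t"
  then obtain S c where S: "open S" "t \<in> S" "\<And>x. x \<in> S \<Longrightarrow> \<rho> x = c"
  proof
    assume "t < \<delta>" then show ?thesis using rho_one by (intro that[of "{..<\<delta>}" 1]) auto
  next
    assume "2 * \<delta> < t" then show ?thesis using rho_zero by (intro that[of "{2*\<delta><..}" 0]) auto
  qed
  have "(\<rho> has_real_derivative 0) (at t)"
    using S by (intro has_field_derivative_transform_within_open[OF DERIV_const[of c] S(1,2)]) auto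
  then show ?thesis using rho_has_derivative DERIV_unique by blast
qed

lemma abs_deriv_rho_le_C: "\<bar>deriv \<rho> t\<bar> \<le> C"
proof -
  have "compact (deriv \<rho> ` {\<delta>..2*\<delta>})"
    using smooth_on_imp_continuous_on[OF smooth_on_deriv_rho]
    by (intro compact_continuous_image) (auto intro: continuous_on_subset)
  then obtain B where B: "\<forall>x\<in>deriv \<rho> ` {\<delta>..2*\<delta>}. \<bar>x\<bar> \<le> B"
    using compact_imp_bounded bounded_iff real_norm_def by metis
  have "\<bar>deriv \<rho> t\<bar> \<le> max B 0" for t
    using B deriv_rho_outside[of t] by (cases "t < \<delta> \<or> 2 * \<delta> < t") (auto simp: le_max_iff_disj)
  then have "bdd_above (range (\<lambda>t. \<bar>deriv \<rho> t\<bar>))" by (intro bdd_aboveI2)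
  then show ?thesis unfolding C_def by (rule cSUP_upper[rotated]) simp
qed

lemma abs_eps_deriv_rho_less_1: "\<bar>\<epsilon> * deriv \<rho> t\<bar> < 1"
proof -
  have C: "C > 0" using eps_C eps_nz by (metis abs_ge_zero inverse_positive_iff_positive le_less_trans)
  have "\<bar>\<epsilon> * deriv \<rho> t\<bar> \<le> \<bar>\<epsilon>\<bar> * C" by (simp add: abs_mult abs_deriv_rho_le_C mult_left_mono)
  also have "\<dots> < inverse C * C" using eps_C C by (intro mult_strict_right_mono)
  finally show ?thesis using C by simp
qed

abbreviation "Ft \<equiv> Phi_tilde \<kappa> blk s \<epsilon> \<rho>"

lemma Ft_eq: "Ft z = P z - M z + \<epsilon> * \<rho> (P z + M z)"
  by (simp add: Phi_tilde_def)

lemma Ft_GS1_act: "A \<in> G_set blk \<Longrightarrow> cmod lam = 1 \<Longrightarrow> Ft (GS1_act \<kappa> blk A lam z) = Ft z"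
  by (simp add: Ft_eq sqn_plus_GS1_act sqn_minus_GS1_act)

lemma Ft_eq_Phi_outer: "2 * \<delta> < P z + M z \<Longrightarrow> Ft z = Phi \<kappa> blk s z"
  using rho_zero by (simp add: Ft_eq Phi_def)

lemma Ft_eq_Phi_inner: "P z + M z < \<delta> \<Longrightarrow> Ft z = Phi \<kappa> blk s z + \<epsilon>"
  using rho_one by (simp add: Ft_eq Phi_def)

definition dFt :: "complex^'n \<Rightarrow> complex^'n \<Rightarrow> real" where
  "dFt z v = dP z v - dM z v + \<epsilon> * ((dP z v + dM z v) * deriv \<rho> (P z + M z))"

lemma Ft_has_derivative: "(Ft has_derivative dFt z) (at z)"
proof -
  have "((\<lambda>z. \<rho> (P z + M z)) has_derivative (\<lambda>v. (dP z v + dM z v) * deriv \<rho> (P z + M z))) (at z)"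
    using has_derivative_compose[OF has_derivative_add[OF sqn_plus_has_derivative sqn_minus_has_derivative]
        rho_has_derivative[unfolded has_field_derivative_def]]
    by (simp add: o_def mult.commute)
  then show ?thesis
    unfolding Phi_tilde_def[abs_def] dFt_def[abs_def]
    by (intro has_derivative_add has_derivative_diff sqn_plus_has_derivative sqn_minus_has_derivative
        has_derivative_mult_right)
qed

lemma critical_point_Ft_iff: "critical_point Ft z \<longleftrightarrow> z = 0"
  unfolding critical_point_iff_derivative_zero[OF Ft_has_derivative]
proof
  assume "\<forall>v. dFt z v = 0"
  show "z = 0"
  proof (rule ccontr)
    assume "z \<noteq> 0"
    then have "zp z \<noteq> 0 \<or> zm z \<noteq> 0" using zplus_add_zminus[of z] by auto
    then show False
    proof
      assume "zp z \<noteq> 0"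
      then have "P z > 0" by (simp add: sqn_plus_pos_iff)
      moreover have "dFt z (zp z) = 2 * P z * (1 + \<epsilon> * deriv \<rho> (P z + M z))"
        by (simp add: dFt_def dP_zplus dM_zplus algebra_simps)
      ultimately show False
        using \<open>\<forall>v. dFt z v = 0\<close> abs_eps_deriv_rho_less_1[of "P z + M z"] by auto
    next
      assume "zm z \<noteq> 0"
      then have "M z > 0" by (simp add: sqn_minus_pos_iff)
      moreover have "dFt z (zm z) = - 2 * M z * (1 - \<epsilon> * deriv \<rho> (P z + M z))"
        by (simp add: dFt_def dP_zminus dM_zminus algebra_simps)
      ultimately show False
        using \<open>\<forall>v. dFt z v = 0\<close> abs_eps_deriv_rho_less_1[of "P z + M z"] by auto
    qed
  qed
qed (simp add: dFt_def dP_zero dM_zero)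

lemma nondegenerate_critical_point_Ft: "nondegenerate_critical_point Ft 0"
  unfolding nondegenerate_critical_point_def
proof (intro conjI exI[of _ "{z. P z + M z < \<delta>}"] exI[of _ Phi_grad])
  show "critical_point Ft 0" by (simp add: critical_point_Ft_iff)
  have "continuous_on UNIV (\<lambda>z. P z + M z)"
    by (intro smooth_on_imp_continuous_on smooth_on_add smooth_on_sqn_plus smooth_on_sqn_minus) simp_all
  then show U: "open {z. P z + M z < \<delta>}" by (simp add: continuous_on_open_vimage open_Collect_less)
  show "0 \<in> {z. P z + M z < \<delta>}" using delta_pos by simp
  show "(Phi_grad has_derivative Phi_grad) (at 0)"
    using linear_Phi_grad by (simp add: linear_conv_bounded_linear bounded_linear_imp_has_derivative)
  show "inj Phi_grad" by (rule inj_Phi_grad)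
  show "\<forall>y\<in>{z. P z + M z < \<delta>}. (Ft has_derivative (\<lambda>v. Phi_grad y \<bullet> v)) (at y)"
  proof
    fix y assume y: "y \<in> {z. P z + M z < \<delta>}"
    have "((\<lambda>z. Phi \<kappa> blk s z + \<epsilon>) has_derivative (\<lambda>v. Phi_grad y \<bullet> v)) (at y)"
      using has_derivative_add_const[OF Phi_has_derivative] .
    then show "(Ft has_derivative (\<lambda>v. Phi_grad y \<bullet> v)) (at y)"
      by (rule has_derivative_transform_within_open[OF _ U y]) (simp add: Ft_eq_Phi_inner)
  qed
qed

lemma regular_value_Ft: "regular_value Ft 0"
proof -
  have "Ft 0 \<noteq> 0" using rho_one delta_pos eps_nz by (simp add: Ft_eq)
  then show ?thesis unfolding regular_value_def critical_point_Ft_iff by blast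
qed

section \<open>The diffeomorphism \<open>psi\<close>\<close>

definition level_P :: "real \<Rightarrow> real" where "level_P t = (t - \<epsilon> * \<rho> t) / 2"
definition level_M :: "real \<Rightarrow> real" where "level_M t = (t + \<epsilon> * \<rho> t) / 2"
definition level_PM :: "real \<Rightarrow> real" where "level_PM t = level_P t * level_M t"

lemma level_P_pos: "\<bar>\<epsilon>\<bar> < t \<Longrightarrow> level_P t > 0"
  and level_M_pos: "\<bar>\<epsilon>\<bar> < t \<Longrightarrow> level_M t > 0"
  using abs_eps_rho_le[of t] by (auto simp: level_P_def level_M_def abs_le_iff)

lemma smooth_on_level_P: "smooth_on U level_P" and smooth_on_level_M: "smooth_on U level_M"
  if "open U"
proof -
  have "smooth_on U (\<lambda>t. (1/2) *\<^sub>R (t - \<epsilon> *\<^sub>R \<rho> t))" "smooth_on U (\<lambda>t. (1/2) *\<^sub>R (t + \<epsilon> *\<^sub>R \<rho> t))"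
    using smooth_on_subset[OF rho_smooth that]
    by (intro smooth_on_scaleR_const smooth_on_diff smooth_on_add smooth_on_id that; simp)+
  then show "smooth_on U level_P" "smooth_on U level_M"
    by (auto elim: smooth_on_cong[where g=level_P] smooth_on_cong[where g=level_M]
        simp: level_P_def level_M_def)
qed

lemma level_PM_has_derivative:
  "(level_PM has_real_derivative (t - \<epsilon>\<^sup>2 * \<rho> t * deriv \<rho> t) / 2) (at t)"
  unfolding level_PM_def[abs_def] level_P_def level_M_def
  by (auto intro!: derivative_eq_intros rho_has_derivative simp: field_simps power2_eq_square)

lemma level_PM_deriv_pos: "0 < t \<Longrightarrow> 0 < (t - \<epsilon>\<^sup>2 * \<rho> t * deriv \<rho> t) / 2"
proof -
  have "\<epsilon>\<^sup>2 * (\<rho> t * deriv \<rho> t) \<le> 0"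
    using rho_nonneg rho_decr by (simp add: mult_nonneg_nonpos)
  then show "0 < t \<Longrightarrow> ?thesis" by (simp add: mult.assoc)
qed

lemma level_PM_strict_mono:
  assumes "\<bar>\<epsilon>\<bar> \<le> a" "a < b"
  shows "level_PM a < level_PM b"
proof (rule DERIV_pos_imp_increasing[OF \<open>a < b\<close>])
  fix x assume "a \<le> x"
  then have "0 < x" using assms(1) eps_nz by linarith
  then show "\<exists>y. (level_PM has_real_derivative y) (at x) \<and> 0 < y"
    using level_PM_has_derivative level_PM_deriv_pos by blast
qed

lemma level_PM_eq: "level_PM t = (t\<^sup>2 - \<epsilon>\<^sup>2 * (\<rho> t)\<^sup>2) / 4"
  by (simp add: level_PM_def level_P_def level_M_def power2_eq_square algebra_simps)

lemma level_PM_surj: "0 < r \<Longrightarrow> \<exists>t. \<bar>\<epsilon>\<bar> < t \<and> level_PM t = r"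
proof -
  assume r: "0 < r"
  define b where "b = \<bar>\<epsilon>\<bar> + 2 * sqrt r"
  have "\<rho> \<bar>\<epsilon>\<bar> = 1" using rho_one eps_delta by simp
  then have "level_PM \<bar>\<epsilon>\<bar> = 0" by (simp add: level_PM_eq)
  moreover have "r \<le> level_PM b"
  proof -
    have "(\<rho> b)\<^sup>2 \<le> 1" using rho_nonneg rho_le_1 by (simp add: power_le_one)
    then have "\<epsilon>\<^sup>2 * (\<rho> b)\<^sup>2 \<le> \<epsilon>\<^sup>2" by (rule mult_left_le) simp
    moreover have "\<epsilon>\<^sup>2 + 4 * r \<le> b\<^sup>2"
      using r by (simp add: b_def power2_sum power_mult_distrib)
    ultimately show ?thesis by (simp add: level_PM_eq)
  qed
  moreover have "\<bar>\<epsilon>\<bar> \<le> b" using r by (simp add: b_def)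
  moreover have "\<forall>x. \<bar>\<epsilon>\<bar> \<le> x \<and> x \<le> b \<longrightarrow> isCont level_PM x"
    using level_PM_has_derivative DERIV_isCont by blast
  ultimately obtain t where "\<bar>\<epsilon>\<bar> \<le> t" "level_PM t = r"
    using IVT[of level_PM "\<bar>\<epsilon>\<bar>" r b] r by auto
  moreover from this have "t \<noteq> \<bar>\<epsilon>\<bar>" using r \<open>level_PM \<bar>\<epsilon>\<bar> = 0\<close> by auto
  ultimately show ?thesis by (intro exI[of _ t]) simp
qed

definition level_PM_inv :: "real \<Rightarrow> real" where
  "level_PM_inv = inv_into {\<bar>\<epsilon>\<bar><..} level_PM"

lemma level_PM_inv: "0 < r \<Longrightarrow> \<bar>\<epsilon>\<bar> < level_PM_inv r \<and> level_PM (level_PM_inv r) = r"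
proof -
  assume "0 < r"
  then have r: "r \<in> level_PM ` {\<bar>\<epsilon>\<bar><..}" using level_PM_surj by auto
  have "inv_into {\<bar>\<epsilon>\<bar><..} level_PM r \<in> {\<bar>\<epsilon>\<bar><..}" using r by (rule inv_into_into)
  moreover have "level_PM (inv_into {\<bar>\<epsilon>\<bar><..} level_PM r) = r" using r by (rule f_inv_into_f)
  ultimately show ?thesis unfolding level_PM_inv_def by simp
qed

lemma level_PM_inv_level_PM: "\<bar>\<epsilon>\<bar> < t \<Longrightarrow> level_PM_inv (level_PM t) = t"
proof -
  have "strict_mono_on {\<bar>\<epsilon>\<bar><..} level_PM"
    by (rule strict_mono_onI) (auto intro: level_PM_strict_mono)
  then have "inj_on level_PM {\<bar>\<epsilon>\<bar><..}" by (rule strict_mono_on_imp_inj_on)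
  then show "\<bar>\<epsilon>\<bar> < t \<Longrightarrow> ?thesis" unfolding level_PM_inv_def by (rule inv_into_f_f) simp
qed

lemma smooth_on_level_PM_inv: "smooth_on {0<..} level_PM_inv"
proof (rule smooth_on_inverse_function[where I="{\<bar>\<epsilon>\<bar><..}" and \<phi>=level_PM
      and \<phi>'="\<lambda>t. (t - \<epsilon>\<^sup>2 * \<rho> t * deriv \<rho> t) / 2"])
  have "smooth_on {\<bar>\<epsilon>\<bar><..} (\<lambda>t. (1/2) *\<^sub>R (t - \<epsilon>\<^sup>2 *\<^sub>R (\<rho> t * deriv \<rho> t)))"
    using smooth_on_subset[OF rho_smooth] smooth_on_subset[OF smooth_on_deriv_rho]
    by (intro smooth_on_scaleR_const smooth_on_diff smooth_on_id smooth_on_mult) simp_all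
  then show "smooth_on {\<bar>\<epsilon>\<bar><..} (\<lambda>t. (t - \<epsilon>\<^sup>2 * \<rho> t * deriv \<rho> t) / 2)"
    by (rule smooth_on_cong) simp
  show "0 < (t - \<epsilon>\<^sup>2 * \<rho> t * deriv \<rho> t) / 2" if "t \<in> {\<bar>\<epsilon>\<bar><..}" for t
    using that level_PM_deriv_pos by (simp add: le_less_trans[OF abs_ge_zero])
qed (simp_all add: level_PM_has_derivative level_PM_inv level_PM_inv_level_PM)

abbreviation "Z_tilde \<equiv> {z. Ft z = 0} - {z. psi \<kappa> blk s z = 0}"
abbreviation "Z_0 \<equiv> {z. Phi \<kappa> blk s z = 0} - {0}"

lemma mem_Z_tilde_iff: "z \<in> Z_tilde \<longleftrightarrow> (\<exists>t. \<bar>\<epsilon>\<bar> < t \<and> P z = level_P t \<and> M z = level_M t)"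
proof
  assume z: "z \<in> Z_tilde"
  then have "P z > 0" "M z > 0"
    by (auto simp: psi_eq_0_iff sqn_plus_pos_iff sqn_minus_pos_iff)
  moreover have eq: "\<epsilon> * \<rho> (P z + M z) = M z - P z" using z by (simp add: Ft_eq)
  moreover have "\<bar>\<epsilon>\<bar> < P z + M z"
  proof (cases "P z + M z < \<delta>")
    case True
    then show ?thesis using eq rho_one \<open>P z > 0\<close> \<open>M z > 0\<close> by auto
  qed (use eps_delta in auto)
  ultimately show "\<exists>t. \<bar>\<epsilon>\<bar> < t \<and> P z = level_P t \<and> M z = level_M t"
    by (intro exI[of _ "P z + M z"]) (simp add: level_P_def level_M_def)
next
  assume "\<exists>t. \<bar>\<epsilon>\<bar> < t \<and> P z = level_P t \<and> M z = level_M t"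
  then obtain t where t: "\<bar>\<epsilon>\<bar> < t" "P z = level_P t" "M z = level_M t" by blast
  then have "P z + M z = t" by (simp add: level_P_def level_M_def)
  then have "Ft z = 0" by (simp only: Ft_eq) (simp add: t level_P_def level_M_def field_simps)
  moreover have "zp z \<noteq> 0" "zm z \<noteq> 0"
    using t level_P_pos level_M_pos by (auto simp: sqn_plus_pos_iff[symmetric] sqn_minus_pos_iff[symmetric])
  ultimately show "z \<in> Z_tilde" by (simp add: psi_eq_0_iff)
qed

lemma mem_Z_0_iff: "w \<in> Z_0 \<longleftrightarrow> P w = M w \<and> 0 < P w"
proof -
  have "w \<noteq> 0 \<longleftrightarrow> 0 < P w \<or> 0 < M w"
    using zplus_add_zminus[of w] by (auto simp: sqn_plus_pos_iff sqn_minus_pos_iff)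
  then show ?thesis by (auto simp: Phi_def)
qed

lemma psi_mem_Z_0: "z \<in> Z_tilde \<Longrightarrow> psi \<kappa> blk s z \<in> Z_0"
  unfolding mem_Z_0_iff sqn_plus_psi sqn_minus_psi
  by (auto simp: psi_eq_0_iff sqn_plus_pos_iff[symmetric] sqn_minus_pos_iff[symmetric])

text \<open>For \<open>w \<in> Z_0\<close> with \<open>P w = M w = q\<close>, the preimage under \<open>psi\<close> lies on the level
  \<open>P + M = t\<close> with \<open>level_PM t = q\<^sup>2\<close>; it is \<open>w\<close> with its two components rescaled so that
  \<open>P = level_P t\<close> and \<open>M = level_M t\<close>.\<close>

definition lift_plus :: "real \<Rightarrow> real" where
  "lift_plus t = (level_P t / level_M t) powr (1/4)"

definition lift_minus :: "real \<Rightarrow> real" where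
  "lift_minus t = (level_M t / level_P t) powr (1/4)"

definition psi_inv :: "complex^'n \<Rightarrow> complex^'n" where
  "psi_inv w = rescale (lift_plus (level_PM_inv ((P w)\<^sup>2))) (lift_minus (level_PM_inv ((P w)\<^sup>2))) w"

lemma sqn_psi_inv:
  assumes "w \<in> Z_0"
  defines "t \<equiv> level_PM_inv ((P w)\<^sup>2)"
  shows "\<bar>\<epsilon>\<bar> < t" "P (psi_inv w) = level_P t" "M (psi_inv w) = level_M t"
proof -
  have w: "P w = M w" "0 < P w" using assms(1) mem_Z_0_iff by auto
  then have t: "\<bar>\<epsilon>\<bar> < t" and "level_PM t = (P w)\<^sup>2"
    using level_PM_inv[of "(P w)\<^sup>2"] by (simp_all add: t_def)
  then show "\<bar>\<epsilon>\<bar> < t" by simp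
  from \<open>level_PM t = (P w)\<^sup>2\<close> have "P w = sqrt (level_P t * level_M t)" using w(2) by (simp add: level_PM_def)
  moreover have "0 < level_P t" "0 < level_M t" using t level_P_pos level_M_pos by auto
  ultimately show "P (psi_inv w) = level_P t" "M (psi_inv w) = level_M t"
    unfolding psi_inv_def t_def[symmetric] sqn_plus_rescale sqn_minus_rescale w(1)[symmetric]
    by (simp_all add: lift_plus_def lift_minus_def quarter_powr_square real_sqrt_divide real_sqrt_mult
        field_simps)
qed

lemma psi_inv_mem_Z_tilde: "w \<in> Z_0 \<Longrightarrow> psi_inv w \<in> Z_tilde"
  using sqn_psi_inv mem_Z_tilde_iff by blast

lemma psi_psi_inv:
  assumes "w \<in> Z_0"
  shows "psi \<kappa> blk s (psi_inv w) = w"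
proof -
  define t where "t = level_PM_inv ((P w)\<^sup>2)"
  have t: "\<bar>\<epsilon>\<bar> < t" "P (psi_inv w) = level_P t" "M (psi_inv w) = level_M t"
    using sqn_psi_inv[OF assms] by (simp_all add: t_def)
  then have pos: "0 < level_P t" "0 < level_M t" using level_P_pos level_M_pos by auto
  then have "zp (psi_inv w) \<noteq> 0" "zm (psi_inv w) \<noteq> 0"
    using t by (simp_all add: sqn_plus_pos_iff[symmetric] sqn_minus_pos_iff[symmetric])
  then have "psi \<kappa> blk s (psi_inv w) = rescale (lift_minus t) (lift_plus t) (psi_inv w)"
    by (simp add: psi_eq_rescale t lift_plus_def lift_minus_def)
  also have "\<dots> = rescale (lift_minus t * lift_plus t) (lift_plus t * lift_minus t) w"
    by (simp add: psi_inv_def rescale_rescale flip: t_def)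
  also have "\<dots> = w"
    using pos by (simp add: lift_plus_def lift_minus_def powr_divide_mult_swap rescale_1_1)
  finally show ?thesis .
qed

lemma psi_inv_psi:
  assumes "z \<in> Z_tilde"
  shows "psi_inv (psi \<kappa> blk s z) = z"
proof -
  obtain t where t: "\<bar>\<epsilon>\<bar> < t" "P z = level_P t" "M z = level_M t"
    using assms mem_Z_tilde_iff by blast
  then have pos: "0 < level_P t" "0 < level_M t" using level_P_pos level_M_pos by auto
  then have nz: "zp z \<noteq> 0" "zm z \<noteq> 0"
    using t by (simp_all add: sqn_plus_pos_iff[symmetric] sqn_minus_pos_iff[symmetric])
  have "(P (psi \<kappa> blk s z))\<^sup>2 = level_PM t"
    using pos by (simp add: sqn_plus_psi t level_PM_def)
  then have "level_PM_inv ((P (psi \<kappa> blk s z))\<^sup>2) = t" using level_PM_inv_level_PM t(1) by simp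
  then have "psi_inv (psi \<kappa> blk s z) = rescale (lift_plus t * lift_minus t) (lift_minus t * lift_plus t) z"
    by (simp add: psi_inv_def psi_eq_rescale[OF nz] rescale_rescale t lift_plus_def lift_minus_def)
  also have "\<dots> = z"
    using pos by (simp add: lift_plus_def lift_minus_def powr_divide_mult_swap rescale_1_1)
  finally show ?thesis .
qed

lemma smooth_map_on_psi: "smooth_map_on Z_tilde (psi \<kappa> blk s)"
proof (rule smooth_map_on_restrict)
  let ?U = "{z. 0 < P z} \<inter> {z. 0 < M z}"
  show "open ?U" using open_sqn_plus_pos open_sqn_minus_pos by blast
  show "Z_tilde \<subseteq> ?U" by (auto simp: psi_eq_0_iff sqn_plus_pos_iff sqn_minus_pos_iff)
  show "smooth_on ?U (\<lambda>z. rescale ((M z / P z) powr (1/4)) ((P z / M z) powr (1/4)) z)"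
    using \<open>open ?U\<close> by (intro smooth_on_rescale smooth_on_quotient_powr smooth_on_sqn_plus smooth_on_sqn_minus) auto
  show "rescale ((M z / P z) powr (1/4)) ((P z / M z) powr (1/4)) z = psi \<kappa> blk s z" if "z \<in> Z_tilde" for z
    using that by (simp add: psi_eq_rescale psi_eq_0_iff)
qed

lemma smooth_map_on_psi_inv: "smooth_map_on Z_0 psi_inv"
proof (rule smooth_map_on_restrict)
  show "open {z. 0 < P z}" by (rule open_sqn_plus_pos)
  show "Z_0 \<subseteq> {z. 0 < P z}" using mem_Z_0_iff by blast
  have P: "smooth_on {z. 0 < P z} P" by (rule smooth_on_sqn_plus[OF open_sqn_plus_pos])
  have "smooth_on {z. 0 < P z} (\<lambda>w. (P w)\<^sup>2)"
    using smooth_on_mult[OF P P] by (simp add: power2_eq_square)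
  then have t: "smooth_on {z. 0 < P z} (\<lambda>w. level_PM_inv ((P w)\<^sup>2))"
    using smooth_on_level_PM_inv by (rule smooth_on_compose) auto
  have "smooth_on {\<bar>\<epsilon>\<bar><..} lift_plus" "smooth_on {\<bar>\<epsilon>\<bar><..} lift_minus"
    unfolding lift_plus_def[abs_def] lift_minus_def[abs_def]
    by (rule smooth_on_quotient_powr; auto intro: smooth_on_level_P smooth_on_level_M level_P_pos level_M_pos)+
  moreover have "(\<lambda>w. level_PM_inv ((P w)\<^sup>2)) ` {z. 0 < P z} \<subseteq> {\<bar>\<epsilon>\<bar><..}"
    using level_PM_inv by auto
  ultimately show "smooth_on {z. 0 < P z} psi_inv"
    unfolding psi_inv_def[abs_def] using smooth_on_compose[OF t] by (intro smooth_on_rescale) blast+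
qed simp

lemma diffeomorphism_onto_psi: "diffeomorphism_onto (psi \<kappa> blk s) Z_tilde Z_0"
proof (rule diffeomorphism_ontoI[where g=psi_inv])
  show "psi \<kappa> blk s ` Z_tilde \<subseteq> Z_0" by (rule image_subsetI) (rule psi_mem_Z_0)
  show "psi_inv ` Z_0 \<subseteq> Z_tilde" by (rule image_subsetI) (rule psi_inv_mem_Z_tilde)
qed (simp_all only: psi_inv_psi psi_psi_inv smooth_map_on_psi smooth_map_on_psi_inv)

end

theorem mainTheorem5:
  fixes \<kappa> :: "nat \<Rightarrow> int" and blk :: "'n::finite \<Rightarrow> nat" and k s :: nat
    and \<delta> \<epsilon> C :: real and \<rho> :: "real \<Rightarrow> real"
  assumes blk_range: "\<forall>j. blk j \<in> {1..k}"
    and s_le: "s \<le> k"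
    and kappa_pos: "\<forall>i\<in>{1..s}. \<kappa> i > 0"
    and kappa_neg: "\<forall>i\<in>{s<..k}. \<kappa> i < 0"
    and kappa_distinct: "inj_on \<kappa> {1..k}"
    and delta_pos: "\<delta> > 0"
    and rho_smooth: "smooth_on UNIV \<rho>"
    and rho_one: "\<forall>t. t < \<delta> \<longrightarrow> \<rho> t = 1"
    and rho_zero: "\<forall>t. t > 2 * \<delta> \<longrightarrow> \<rho> t = 0"
    and rho_decr: "\<forall>t. deriv \<rho> t \<le> 0"
    and C_def: "C = (SUP t. \<bar>deriv \<rho> t\<bar>)"
    and eps_nz: "\<epsilon> \<noteq> 0"
    and eps_C: "\<bar>\<epsilon>\<bar> < inverse C"
    and eps_delta: "\<bar>\<epsilon>\<bar> < \<delta>"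
  shows
    "(\<forall>A lam z. A \<in> G_set blk \<longrightarrow> cmod lam = 1 \<longrightarrow>
        Phi_tilde \<kappa> blk s \<epsilon> \<rho> (GS1_act \<kappa> blk A lam z) = Phi_tilde \<kappa> blk s \<epsilon> \<rho> z)
   \<and> (\<forall>z. critical_point (Phi_tilde \<kappa> blk s \<epsilon> \<rho>) z \<longleftrightarrow> z = 0)
   \<and> nondegenerate_critical_point (Phi_tilde \<kappa> blk s \<epsilon> \<rho>) 0
   \<and> regular_value (Phi_tilde \<kappa> blk s \<epsilon> \<rho>) 0
   \<and> {z. Phi_tilde \<kappa> blk s \<epsilon> \<rho> z = 0 \<and> sqn_plus \<kappa> blk s z + sqn_minus \<kappa> blk s z > 2 * \<delta>}
       = {z. Phi \<kappa> blk s z = 0 \<and> sqn_plus \<kappa> blk s z + sqn_minus \<kappa> blk s z > 2 * \<delta>}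
   \<and> {z. Phi_tilde \<kappa> blk s \<epsilon> \<rho> z = 0 \<and> sqn_plus \<kappa> blk s z + sqn_minus \<kappa> blk s z < \<delta>}
       = {z. Phi \<kappa> blk s z = - \<epsilon> \<and> sqn_plus \<kappa> blk s z + sqn_minus \<kappa> blk s z < \<delta>}
   \<and> (\<forall>z\<in>{z. Phi_tilde \<kappa> blk s \<epsilon> \<rho> z = 0} - {z. psi \<kappa> blk s z = 0}.
        \<forall>A lam. A \<in> G_set blk \<longrightarrow> cmod lam = 1 \<longrightarrow>
          psi \<kappa> blk s (GS1_act \<kappa> blk A lam z) = GS1_act \<kappa> blk A lam (psi \<kappa> blk s z))
   \<and> diffeomorphism_onto (psi \<kappa> blk s)
       ({z. Phi_tilde \<kappa> blk s \<epsilon> \<rho> z = 0} - {z. psi \<kappa> blk s z = 0})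
       ({z. Phi \<kappa> blk s z = 0} - {0})"
proof -
  interpret cutoff \<kappa> blk k s \<delta> \<epsilon> C \<rho>
    using assms by unfold_locales auto
  have "Ft z = 0 \<and> P z + M z > 2 * \<delta> \<longleftrightarrow> Phi \<kappa> blk s z = 0 \<and> P z + M z > 2 * \<delta>" for z
    using Ft_eq_Phi_outer[of z] by auto
  moreover have "Ft z = 0 \<and> P z + M z < \<delta> \<longleftrightarrow> Phi \<kappa> blk s z = - \<epsilon> \<and> P z + M z < \<delta>" for z
    using Ft_eq_Phi_inner[of z] by auto
  ultimately have outer: "{z. Ft z = 0 \<and> P z + M z > 2 * \<delta>} = {z. Phi \<kappa> blk s z = 0 \<and> P z + M z > 2 * \<delta>}"
    and inner: "{z. Ft z = 0 \<and> P z + M z < \<delta>} = {z. Phi \<kappa> blk s z = - \<epsilon> \<and> P z + M z < \<delta>}"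
    by simp_all
  show ?thesis
    by (intro conjI allI impI ballI Ft_GS1_act critical_point_Ft_iff nondegenerate_critical_point_Ft
        regular_value_Ft outer inner psi_GS1_act diffeomorphism_onto_psi)
qed

end
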